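(* Consider the Polyhedral Clinching Auction run on the modified market as described in the context. At the moment just before the clinching step of any iteration, with $x_i=w(E_i)$ for the current $w$ and $d$ the current demands, for every $S\subseteq N$, $$g_{x,d}(S)=\min_{S'\subseteq S}\{f(E_{S'})-x(S')+d(S\setminus S')\}.$$
   Context: Market model. Buyers $N_0=\{1,\dots,n\}$, sellers $M=\{1,\dots,m\}$, bipartite edge set $E_0\subseteq N_0\times M$; edge $(i,j)$ written $ij$; for a set $S$ of participants $E_S$ is the set of edges incident to a member of $S$ ($E_i=E_{\{i\}}$); $w(F)=\sum_{e\in F}w_e$. Each seller $j$ has a monotone submodular $f_j:2^{E_j}\to\mathbb R_+$, $f_j(\emptyset)=0$. Buyer $i$ has per-unit valuation $v_i>0$ and budget $B_i\ge0$; seller $j$ has per-unit valuation $\rho_j>0$. Modified market. For each seller $j$ add a virtual buyer $n+j$ adjacent only to $j$ with $v_{n+j}=\rho_j$, $B_{n+j}=\infty$; $N=\{1,\dots,n+m\}$, $E=E_0\cup\{(n+j)j\}$; extend $f_j$ by $f_j(F)=f_j(E_j)$ if $(n+j)j\in F$, unchanged otherwise; $P_j=\{y\in\mathbb R^{E_j}_+:y(F)\le f_j(F)\ \forall F\}$, $P=\{w\in\mathbb R^E_+:w|_{E_j}\in P_j\ \forall j\}$, $f(S)=\sum_jf_j(S\cap E_j)$. For $x\in\mathbb R^N_+$, $d\in[0,\infty]^N$ and $S\subseteq N$: $g_{x,d}(S)=\min_{S'\subseteq S}\bigl\{\min_{S'\subseteq S''\subseteq N}\{f(E_{S''})-x(S'')\}+d(S\setminus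 S')\bigr\}$. Polyhedral Clinching Auction (PCA) with step $\varepsilon>0$: bids $v'_i$ for $i\in N$ (virtual buyer $n+j$ bids seller $j$'s bid), all assumed to be positive integer multiples of $\varepsilon$. State: $w\in\mathbb R^E_+$, payments $p$, revenues $r$, price clocks $c_i$, demands $d_i\in[0,\infty]$; initially $w=0,p=0,r=0$, $c_i=0$, $d_i=\infty$, pointer $l=1$. For $w,d$ let $P_{w,d}=\{y\in\mathbb R^E_+: w+y\in P,\ y(E_k)\le d_k\ \forall k\}$ and for $\xi\in\mathbb R^{E_i}_+$ let $P^i_{w,d}(\xi)=\{u\in\mathbb R^{N\setminus\{i\}}_+:\exists y\in P_{w,d},\ y|_{E_i}=\xi,\ y(E_k)=u_k\ \forall k\ne i\}$. While some $d_i\neq 0$, an iteration does: (1) clinching step: for $i=1,\dots,n+m$ in turn, choose a maximal $\xi_i\in\mathbb R^{E_i}_+$ with $P^i_{w,d}(\xi_i)=P^i_{w,d}(0)$, set $p_i\leftarrow p_i+c_i\xi_i(E_i)$, $w_{ij}\leftarrow w_{ij}+\xi_{ij}$, and reset every demand to $d_k=(B_k-p_k)/c_k$ if $c_k<v'_k$ and $d_k=0$ otherwise ($d_k=\infty$ while $c_k=0$); then $r_j\leftarrow r_j+\sum_{ij\in E_j}c_i\xi_{ij}$; (2) $c_l\leftarrow c_l+\varepsilon$ and $d_l\leftarrow(B_l-p_l)/c_l$ if $c_l<v'_l$, else $d_l\leftarrow0$; (3) advance $l$ cyclically. *)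

theory Defs
  imports Complex_Main "HOL-Library.Extended_Real"
begin

text \<open>Buyers 1..n are real buyers, buyers n+1..n+m are
  the virtual buyers (n+j is attached to seller j); sellers are 1..m.
  An edge ij is the pair (i,j) (buyer, seller). Vectors on edges/buyers are total
  functions that vanish outside their index set.\<close>

definition Nset :: "nat \<Rightarrow> nat \<Rightarrow> nat set" where
  "Nset n m = {1..n+m}"

definition Mset :: "nat \<Rightarrow> nat set" where
  "Mset m = {1..m}"

definition Eall :: "nat \<Rightarrow> nat \<Rightarrow> (nat \<times> nat) set \<Rightarrow> (nat \<times> nat) set" where
  "Eall n m E0 = E0 \<union> {(n + j, j) | j. j \<in> Mset m}"

definition EB :: "(nat \<times> nat) set \<Rightarrow> nat set \<Rightarrow> (nat \<times> nat) set" where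
  "EB E S = {e \<in> E. fst e \<in> S}"

definition ES :: "(nat \<times> nat) set \<Rightarrow> nat \<Rightarrow> (nat \<times> nat) set" where
  "ES E j = {e \<in> E. snd e = j}"

definition fext :: "nat \<Rightarrow> (nat \<times> nat) set \<Rightarrow> (nat \<Rightarrow> (nat \<times> nat) set \<Rightarrow> real)
    \<Rightarrow> nat \<Rightarrow> (nat \<times> nat) set \<Rightarrow> real" where
  "fext n E0 f j F = (if (n + j, j) \<in> F then f j (ES E0 j) else f j F)"

definition ftot :: "nat \<Rightarrow> nat \<Rightarrow> (nat \<times> nat) set \<Rightarrow> (nat \<Rightarrow> (nat \<times> nat) set \<Rightarrow> real)
    \<Rightarrow> (nat \<times> nat) set \<Rightarrow> real" where
  "ftot n m E0 f F = (\<Sum>j\<in>Mset m. fext n E0 f j (F \<inter> ES (Eall n m E0) j))"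

definition inPj :: "nat \<Rightarrow> nat \<Rightarrow> (nat \<times> nat) set \<Rightarrow> (nat \<Rightarrow> (nat \<times> nat) set \<Rightarrow> real)
    \<Rightarrow> nat \<Rightarrow> (nat \<times> nat \<Rightarrow> real) \<Rightarrow> bool" where
  "inPj n m E0 f j y \<longleftrightarrow>
     (\<forall>e\<in>ES (Eall n m E0) j. 0 \<le> y e) \<and>
     (\<forall>F. F \<subseteq> ES (Eall n m E0) j \<longrightarrow> sum y F \<le> fext n E0 f j F)"

definition inP :: "nat \<Rightarrow> nat \<Rightarrow> (nat \<times> nat) set \<Rightarrow> (nat \<Rightarrow> (nat \<times> nat) set \<Rightarrow> real)
    \<Rightarrow> (nat \<times> nat \<Rightarrow> real) \<Rightarrow> bool" where
  "inP n m E0 f w \<longleftrightarrow>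
     (\<forall>e\<in>Eall n m E0. 0 \<le> w e) \<and> (\<forall>e. e \<notin> Eall n m E0 \<longrightarrow> w e = 0) \<and>
     (\<forall>j\<in>Mset m. inPj n m E0 f j w)"

definition Pwd :: "nat \<Rightarrow> nat \<Rightarrow> (nat \<times> nat) set \<Rightarrow> (nat \<Rightarrow> (nat \<times> nat) set \<Rightarrow> real)
    \<Rightarrow> (nat \<times> nat \<Rightarrow> real) \<Rightarrow> (nat \<Rightarrow> ereal) \<Rightarrow> (nat \<times> nat \<Rightarrow> real) set" where
  "Pwd n m E0 f w d =
     {y. (\<forall>e\<in>Eall n m E0. 0 \<le> y e) \<and> (\<forall>e. e \<notin> Eall n m E0 \<longrightarrow> y e = 0) \<and>
         inP n m E0 f (\<lambda>e. w e + y e) \<and>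
         (\<forall>k\<in>Nset n m. ereal (sum y (EB (Eall n m E0) {k})) \<le> d k)}"

definition Pi_wd :: "nat \<Rightarrow> nat \<Rightarrow> (nat \<times> nat) set \<Rightarrow> (nat \<Rightarrow> (nat \<times> nat) set \<Rightarrow> real)
    \<Rightarrow> (nat \<times> nat \<Rightarrow> real) \<Rightarrow> (nat \<Rightarrow> ereal) \<Rightarrow> nat \<Rightarrow> (nat \<times> nat \<Rightarrow> real)
    \<Rightarrow> (nat \<Rightarrow> real) set" where
  "Pi_wd n m E0 f w d i xi =
     {u. (\<forall>k. k \<notin> Nset n m - {i} \<longrightarrow> u k = 0) \<and>
         (\<exists>y\<in>Pwd n m E0 f w d.
            (\<forall>e\<in>EB (Eall n m E0) {i}. y e = xi e) \<and>
            (\<forall>k\<in>Nset n m - {i}. u k = sum y (EB (Eall n m E0) {k})))}"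

definition gfun :: "nat \<Rightarrow> nat \<Rightarrow> (nat \<times> nat) set \<Rightarrow> (nat \<Rightarrow> (nat \<times> nat) set \<Rightarrow> real)
    \<Rightarrow> (nat \<Rightarrow> real) \<Rightarrow> (nat \<Rightarrow> ereal) \<Rightarrow> nat set \<Rightarrow> ereal" where
  "gfun n m E0 f x d S =
     Min {Min {ereal (ftot n m E0 f (EB (Eall n m E0) S'') - sum x S'') | S''.
                 S' \<subseteq> S'' \<and> S'' \<subseteq> Nset n m}
          + sum d (S - S') | S'. S' \<subseteq> S}"

definition Bext :: "nat \<Rightarrow> (nat \<Rightarrow> real) \<Rightarrow> nat \<Rightarrow> ereal" where
  "Bext n B k = (if k \<le> n then ereal (B k) else \<infinity>)"

definition dem :: "(nat \<Rightarrow> ereal) \<Rightarrow> (nat \<Rightarrow> real) \<Rightarrow> (nat \<Rightarrow> real) \<Rightarrow> (nat \<Rightarrow> real)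
    \<Rightarrow> nat \<Rightarrow> ereal" where
  "dem BB v p c k =
     (if c k = 0 then \<infinity> else if c k < v k then (BB k - ereal (p k)) / ereal (c k) else 0)"

record pca_state =
  sw :: "nat \<times> nat \<Rightarrow> real"
  sp :: "nat \<Rightarrow> real"
  sr :: "nat \<Rightarrow> real"
  sc :: "nat \<Rightarrow> real"
  sd :: "nat \<Rightarrow> ereal"
  sl :: nat

definition pca_init :: pca_state where
  "pca_init = \<lparr>sw = (\<lambda>_. 0), sp = (\<lambda>_. 0), sr = (\<lambda>_. 0), sc = (\<lambda>_. 0),
                sd = (\<lambda>_. \<infinity>), sl = 1\<rparr>"

definition admissible_xi :: "nat \<Rightarrow> nat \<Rightarrow> (nat \<times> nat) set \<Rightarrow> (nat \<Rightarrow> (nat \<times> nat) set \<Rightarrow> real)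
    \<Rightarrow> (nat \<times> nat \<Rightarrow> real) \<Rightarrow> (nat \<Rightarrow> ereal) \<Rightarrow> nat \<Rightarrow> (nat \<times> nat \<Rightarrow> real) \<Rightarrow> bool" where
  "admissible_xi n m E0 f w d i xi \<longleftrightarrow>
     (\<forall>e\<in>EB (Eall n m E0) {i}. 0 \<le> xi e) \<and>
     (\<forall>e. e \<notin> EB (Eall n m E0) {i} \<longrightarrow> xi e = 0) \<and>
     Pi_wd n m E0 f w d i xi = Pi_wd n m E0 f w d i (\<lambda>_. 0)"

definition maximal_xi :: "nat \<Rightarrow> nat \<Rightarrow> (nat \<times> nat) set \<Rightarrow> (nat \<Rightarrow> (nat \<times> nat) set \<Rightarrow> real)
    \<Rightarrow> (nat \<times> nat \<Rightarrow> real) \<Rightarrow> (nat \<Rightarrow> ereal) \<Rightarrow> nat \<Rightarrow> (nat \<times> nat \<Rightarrow> real) \<Rightarrow> bool" where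
  "maximal_xi n m E0 f w d i xi \<longleftrightarrow>
     admissible_xi n m E0 f w d i xi \<and>
     (\<forall>xi'. admissible_xi n m E0 f w d i xi' \<and> (\<forall>e. xi e \<le> xi' e) \<longrightarrow> xi' = xi)"

definition clinch_one :: "nat \<Rightarrow> nat \<Rightarrow> (nat \<times> nat) set \<Rightarrow> (nat \<Rightarrow> (nat \<times> nat) set \<Rightarrow> real)
    \<Rightarrow> (nat \<Rightarrow> real) \<Rightarrow> (nat \<Rightarrow> real) \<Rightarrow> nat \<Rightarrow> pca_state \<Rightarrow> pca_state \<Rightarrow> bool" where
  "clinch_one n m E0 f B v i s s' \<longleftrightarrow>
     (\<exists>xi. maximal_xi n m E0 f (sw s) (sd s) i xi \<and>
        (let p' = (sp s)(i := sp s i + sc s i * sum xi (EB (Eall n m E0) {i}))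
         in s' = s\<lparr>sw := (\<lambda>e. sw s e + xi e),
                   sp := p',
                   sd := (\<lambda>k. dem (Bext n B) v p' (sc s) k),
                   sr := (\<lambda>j. sr s j + sc s i * xi (i, j))\<rparr>))"

inductive clinch_from :: "nat \<Rightarrow> nat \<Rightarrow> (nat \<times> nat) set \<Rightarrow> (nat \<Rightarrow> (nat \<times> nat) set \<Rightarrow> real)
    \<Rightarrow> (nat \<Rightarrow> real) \<Rightarrow> (nat \<Rightarrow> real) \<Rightarrow> nat \<Rightarrow> pca_state \<Rightarrow> pca_state \<Rightarrow> bool"
  for n m E0 f B v where
  cf_done: "n + m < k \<Longrightarrow> clinch_from n m E0 f B v k s s"
| cf_next: "k \<le> n + m \<Longrightarrow> clinch_one n m E0 f B v k s s' \<Longrightarrow>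
         clinch_from n m E0 f B v (Suc k) s' s'' \<Longrightarrow> clinch_from n m E0 f B v k s s''"

definition pca_iter :: "nat \<Rightarrow> nat \<Rightarrow> (nat \<times> nat) set \<Rightarrow> (nat \<Rightarrow> (nat \<times> nat) set \<Rightarrow> real)
    \<Rightarrow> (nat \<Rightarrow> real) \<Rightarrow> (nat \<Rightarrow> real) \<Rightarrow> real \<Rightarrow> pca_state \<Rightarrow> pca_state \<Rightarrow> bool" where
  "pca_iter n m E0 f B v \<epsilon> s s'' \<longleftrightarrow>
     (\<exists>s1. clinch_from n m E0 f B v 1 s s1 \<and>
        (let l = sl s1; c' = (sc s1)(l := sc s1 l + \<epsilon>)
         in s'' = s1\<lparr>sc := c',
                     sd := (sd s1)(l := dem (Bext n B) v (sp s1) c' l),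
                     sl := (if l \<ge> n + m then 1 else l + 1)\<rparr>))"

text \<open>States at the start of iterations (just before a clinching step), reachable
  from the initial state, each iteration being executed only while some d_i \<noteq> 0.\<close>
inductive pca_reach :: "nat \<Rightarrow> nat \<Rightarrow> (nat \<times> nat) set \<Rightarrow> (nat \<Rightarrow> (nat \<times> nat) set \<Rightarrow> real)
    \<Rightarrow> (nat \<Rightarrow> real) \<Rightarrow> (nat \<Rightarrow> real) \<Rightarrow> real \<Rightarrow> pca_state \<Rightarrow> bool"
  for n m E0 f B v \<epsilon> where
  init: "pca_reach n m E0 f B v \<epsilon> pca_init"
| step: "pca_reach n m E0 f B v \<epsilon> s \<Longrightarrow> (\<exists>k\<in>Nset n m. sd s k \<noteq> 0) \<Longrightarrow>
         pca_iter n m E0 f B v \<epsilon> s s' \<Longrightarrow> pca_reach n m E0 f B v \<epsilon> s'"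

end

(* For demands d and weights w with x_i = w(E_i), let G(R) be the convolution
   min_{T \<subseteq> R} (f(E_T) - x(T) + d(R - T)).  Every reachable state satisfies the invariant
   G(R) \<le> f(F) - w(F) for all edge sets F \<supseteq> E_R.  It holds initially since d = \<infinity>, and raising a
   price only lowers demands.  When buyer i clinches \<xi>, the convolution of every R with i \<in> R
   drops by exactly \<xi>(E_i).  For i \<notin> R, G(R) is realised by a vector of P_{w,d} on the edges
   of R: a greedy base of G gives row sums satisfying Hall's condition for the polymatroid f - w,
   and a Rado-type theorem turns them into such a vector; P^i(\<xi>) = P^i(0) then lets \<xi> be added
   to it.  Given the invariant, no S'' \<supseteq> S' in the inner minimum of g_{x,d} beats the
   convolution, so g_{x,d}(S) = G(S). *)

theory Submission
  imports Defs
begin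

section \<open>Polymatroids\<close>

definition submodular_on :: "'a set \<Rightarrow> ('a set \<Rightarrow> real) \<Rightarrow> bool" where
  "submodular_on X \<sigma> \<longleftrightarrow> (\<forall>A B. A \<subseteq> X \<longrightarrow> B \<subseteq> X \<longrightarrow> \<sigma> (A \<union> B) + \<sigma> (A \<inter> B) \<le> \<sigma> A + \<sigma> B)"

lemma submodular_onD:
  "submodular_on X \<sigma> \<Longrightarrow> A \<subseteq> X \<Longrightarrow> B \<subseteq> X \<Longrightarrow> \<sigma> (A \<union> B) + \<sigma> (A \<inter> B) \<le> \<sigma> A + \<sigma> B"
  by (simp add: submodular_on_def)

lemma submodular_on_subset: "submodular_on X \<sigma> \<Longrightarrow> Y \<subseteq> X \<Longrightarrow> submodular_on Y \<sigma>"
  by (auto simp: submodular_on_def)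

lemma submodular_on_diff_sum:
  assumes "finite X" "submodular_on X \<rho>"
  shows "submodular_on X (\<lambda>A. \<rho> A - sum z A)"
  unfolding submodular_on_def
proof (intro allI impI)
  fix A B assume AB: "A \<subseteq> X" "B \<subseteq> X"
  then have "sum z (A \<union> B) + sum z (A \<inter> B) = sum z A + sum z B"
    using finite_subset[OF _ assms(1)] by (intro sum.union_inter) auto
  moreover have "\<rho> (A \<union> B) + \<rho> (A \<inter> B) \<le> \<rho> A + \<rho> B"
    using submodular_onD[OF assms(2) AB] .
  ultimately show "\<rho> (A \<union> B) - sum z (A \<union> B) + (\<rho> (A \<inter> B) - sum z (A \<inter> B))
      \<le> \<rho> A - sum z A + (\<rho> B - sum z B)"
    by linarith
qed

text \<open>The greedy algorithm: each element added to X receives its marginal value.\<close>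
lemma polymatroid_base_exists:
  fixes \<sigma> :: "'a set \<Rightarrow> real"
  assumes "finite X" "\<sigma> {} = 0" "mono_on (Pow X) \<sigma>" "submodular_on X \<sigma>"
  shows "\<exists>z. (\<forall>e. 0 \<le> z e) \<and> (\<forall>e. e \<notin> X \<longrightarrow> z e = 0) \<and>
             (\<forall>A\<subseteq>X. sum z A \<le> \<sigma> A) \<and> sum z X = \<sigma> X"
  using assms
proof (induction X rule: finite_induct)
  case empty
  then show ?case by (intro exI[of _ "\<lambda>_. 0"]) auto
next
  case (insert a X)
  have "mono_on (Pow X) \<sigma>" "submodular_on X \<sigma>"
    using mono_on_subset[OF insert.prems(2), of "Pow X"] submodular_on_subset[OF insert.prems(3), of X]
    by auto
  then obtain z where z: "\<forall>e. 0 \<le> z e" "\<forall>e. e \<notin> X \<longrightarrow> z e = 0"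
      "\<forall>A\<subseteq>X. sum z A \<le> \<sigma> A" "sum z X = \<sigma> X"
    using insert.IH insert.prems(1) by blast
  define z' where "z' = z(a := \<sigma> (insert a X) - \<sigma> X)"
  have sum_z': "sum z' A = sum z A" if "a \<notin> A" for A
    using that by (intro sum.cong) (auto simp: z'_def)
  have "0 \<le> z' a"
    using mono_onD[OF insert.prems(2), of X "insert a X"] by (auto simp: z'_def)
  moreover have "sum z' A \<le> \<sigma> A" if A: "A \<subseteq> insert a X" for A
  proof (cases "a \<in> A")
    case True
    have "A \<union> X = insert a X" "A \<inter> X = A - {a}"
      using A True insert.hyps(2) by auto
    then have "\<sigma> (insert a X) + \<sigma> (A - {a}) \<le> \<sigma> A + \<sigma> X"
      using submodular_onD[OF insert.prems(3), of A X] A by auto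
    moreover have "sum z' A = z' a + sum z (A - {a})"
      using True A insert.hyps(1) sum_z'[of "A - {a}"]
      by (simp add: sum.remove finite_subset[of A "insert a X"])
    moreover have "sum z (A - {a}) \<le> \<sigma> (A - {a})"
      using z(3) A by blast
    ultimately show ?thesis by (simp add: z'_def)
  qed (use A z(3) sum_z' in auto)
  moreover have "sum z' (insert a X) = \<sigma> (insert a X)"
    using insert.hyps sum_z'[of X] z(4) by (simp add: z'_def)
  ultimately show ?case
    using z(1,2) by (intro exI[of _ z']) (auto simp: z'_def)
qed

lemma polymatroid_vector_with_sum:
  fixes \<sigma> :: "'a set \<Rightarrow> real"
  assumes "finite X" "\<sigma> {} = 0" "mono_on (Pow X) \<sigma>" "submodular_on X \<sigma>"
    and "0 \<le> c" "c \<le> \<sigma> X"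
  shows "\<exists>z. (\<forall>e. 0 \<le> z e) \<and> (\<forall>e. e \<notin> X \<longrightarrow> z e = 0) \<and>
             (\<forall>A\<subseteq>X. sum z A \<le> \<sigma> A) \<and> sum z X = c"
proof -
  obtain z where z: "\<forall>e. 0 \<le> z e" "\<forall>e. e \<notin> X \<longrightarrow> z e = 0"
      "\<forall>A\<subseteq>X. sum z A \<le> \<sigma> A" "sum z X = \<sigma> X"
    using polymatroid_base_exists[OF assms(1-4)] by blast
  define t where "t = (if \<sigma> X = 0 then 0 else c / \<sigma> X)"
  have t: "0 \<le> t" "t \<le> 1" "t * \<sigma> X = c"
    using assms(5,6) by (auto simp: t_def)
  have "sum (\<lambda>e. t * z e) A \<le> \<sigma> A" if "A \<subseteq> X" for A
  proof -
    have "t * sum z A \<le> sum z A"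
      using t z(1) by (simp add: mult_left_le_one_le sum_nonneg)
    moreover have "sum z A \<le> \<sigma> A"
      using z(3) that by blast
    ultimately show ?thesis
      by (simp add: sum_distrib_left)
  qed
  moreover have "sum (\<lambda>e. t * z e) X = c"
    using z(4) t(3) by (simp add: sum_distrib_left[symmetric])
  ultimately show ?thesis
    using z(1,2) t(1) by (intro exI[of _ "\<lambda>e. t * z e"]) auto
qed

section \<open>A Rado-type theorem for submodular functions\<close>

lemma EB_subset: "EB E T \<subseteq> E"
  by (auto simp: EB_def)

lemma EB_mono: "T \<subseteq> T' \<Longrightarrow> EB E T \<subseteq> EB E T'"
  by (auto simp: EB_def)

lemma EB_empty [simp]: "EB E {} = {}"
  by (simp add: EB_def)

lemma EB_Un: "EB E (A \<union> B) = EB E A \<union> EB E B"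
  by (auto simp: EB_def)

lemma EB_Int: "EB E (A \<inter> B) = EB E A \<inter> EB E B"
  by (auto simp: EB_def)

lemma EB_singleton_disjoint: "k \<notin> T \<Longrightarrow> EB E {k} \<inter> EB E T = {}"
  by (auto simp: EB_def)

definition hall_condition ::
    "(nat \<times> nat) set \<Rightarrow> ((nat \<times> nat) set \<Rightarrow> real) \<Rightarrow> (nat \<Rightarrow> real) \<Rightarrow> nat set \<Rightarrow> bool" where
  "hall_condition E \<rho> u R \<longleftrightarrow> (\<forall>T F. T \<subseteq> R \<longrightarrow> F \<subseteq> E \<longrightarrow> EB E T \<subseteq> F \<longrightarrow> sum u T \<le> \<rho> F)"

lemma hall_conditionD:
  "hall_condition E \<rho> u R \<Longrightarrow> T \<subseteq> R \<Longrightarrow> F \<subseteq> E \<Longrightarrow> EB E T \<subseteq> F \<Longrightarrow> sum u T \<le> \<rho> F"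
  by (simp add: hall_condition_def)

lemma hall_condition_subset: "hall_condition E \<rho> u R \<Longrightarrow> R' \<subseteq> R \<Longrightarrow> hall_condition E \<rho> u R'"
  by (auto simp: hall_condition_def)

definition hall_slack :: "(nat \<times> nat) set \<Rightarrow> ((nat \<times> nat) set \<Rightarrow> real) \<Rightarrow> (nat \<Rightarrow> real)
    \<Rightarrow> nat set \<Rightarrow> (nat \<times> nat) set \<Rightarrow> real" where
  "hall_slack E \<rho> u R H =
     Min ((\<lambda>(T, F). \<rho> F - sum u T) ` {(T, F). T \<subseteq> R \<and> F \<subseteq> E \<and> EB E T \<union> H \<subseteq> F})"

lemma finite_hall_pairs:
  assumes "finite E" "finite R"
  shows "finite {(T, F). T \<subseteq> R \<and> F \<subseteq> E \<and> EB E T \<union> H \<subseteq> F}"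
  by (rule finite_subset[of _ "Pow R \<times> Pow E"]) (use assms in auto)

lemma hall_slack_le:
  assumes "finite E" "finite R" "T \<subseteq> R" "F \<subseteq> E" "EB E T \<union> H \<subseteq> F"
  shows "hall_slack E \<rho> u R H \<le> \<rho> F - sum u T"
  unfolding hall_slack_def using assms finite_hall_pairs[OF assms(1,2)]
  by (intro Min_le) auto

lemma hall_slack_attained:
  assumes "finite E" "finite R" "H \<subseteq> E"
  obtains T F where "T \<subseteq> R" "F \<subseteq> E" "EB E T \<union> H \<subseteq> F" "hall_slack E \<rho> u R H = \<rho> F - sum u T"
proof -
  have "({}, E) \<in> {(T, F). T \<subseteq> R \<and> F \<subseteq> E \<and> EB E T \<union> H \<subseteq> F}"
    using assms(3) by auto
  then have "hall_slack E \<rho> u R H \<in> (\<lambda>(T, F). \<rho> F - sum u T) ` {(T, F). T \<subseteq> R \<and> F \<subseteq> E \<and> EB E T \<union> H \<subseteq> F}"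
    unfolding hall_slack_def using finite_hall_pairs[OF assms(1,2)] by (intro Min_in) blast+
  then show ?thesis
    using that by auto
qed

lemma hall_slack_nonneg:
  assumes "finite E" "finite R" "H \<subseteq> E" "hall_condition E \<rho> u R"
  shows "0 \<le> hall_slack E \<rho> u R H"
proof -
  obtain T F where "T \<subseteq> R" "F \<subseteq> E" "EB E T \<union> H \<subseteq> F" "hall_slack E \<rho> u R H = \<rho> F - sum u T"
    using hall_slack_attained[OF assms(1-3)] .
  moreover from this have "sum u T \<le> \<rho> F"
    using hall_conditionD[OF assms(4)] by blast
  ultimately show ?thesis
    by linarith
qed

lemma hall_slack_empty:
  assumes "finite E" "finite R" "hall_condition E \<rho> u R" "\<rho> {} = 0"
  shows "hall_slack E \<rho> u R {} = 0"
proof -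
  have "hall_slack E \<rho> u R {} \<le> \<rho> {} - sum u {}"
    using assms(1,2) by (rule hall_slack_le) auto
  moreover have "0 \<le> hall_slack E \<rho> u R {}"
    by (rule hall_slack_nonneg[OF assms(1,2) _ assms(3)]) simp
  ultimately show ?thesis
    using assms(4) by simp
qed

lemma hall_slack_mono:
  assumes "finite E" "finite R"
  shows "mono_on (Pow E) (hall_slack E \<rho> u R)"
proof (rule mono_onI)
  fix A B assume "A \<in> Pow E" "B \<in> Pow E" "A \<le> B"
  then have "B \<subseteq> E"
    by simp
  then obtain T F where TF: "T \<subseteq> R" "F \<subseteq> E" "EB E T \<union> B \<subseteq> F" "hall_slack E \<rho> u R B = \<rho> F - sum u T"
    by (rule hall_slack_attained[OF assms])
  have "EB E T \<union> A \<subseteq> F"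
    using TF(3) \<open>A \<le> B\<close> by blast
  then show "hall_slack E \<rho> u R A \<le> hall_slack E \<rho> u R B"
    unfolding TF(4) using TF(1,2) by (rule hall_slack_le[OF assms, rotated 2])
qed

lemma hall_slack_submodular:
  assumes "finite E" "finite R" "submodular_on E \<rho>"
  shows "submodular_on E (hall_slack E \<rho> u R)"
  unfolding submodular_on_def
proof (intro allI impI)
  fix A B assume "A \<subseteq> E" "B \<subseteq> E"
  obtain T1 F1 where 1: "T1 \<subseteq> R" "F1 \<subseteq> E" "EB E T1 \<union> A \<subseteq> F1" "hall_slack E \<rho> u R A = \<rho> F1 - sum u T1"
    using hall_slack_attained[OF assms(1,2) \<open>A \<subseteq> E\<close>] .
  obtain T2 F2 where 2: "T2 \<subseteq> R" "F2 \<subseteq> E" "EB E T2 \<union> B \<subseteq> F2" "hall_slack E \<rho> u R B = \<rho> F2 - sum u T2"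
    using hall_slack_attained[OF assms(1,2) \<open>B \<subseteq> E\<close>] .
  have "hall_slack E \<rho> u R (A \<union> B) \<le> \<rho> (F1 \<union> F2) - sum u (T1 \<union> T2)"
    using 1 2 by (intro hall_slack_le[OF assms(1,2)]) (auto simp: EB_Un)
  moreover have "hall_slack E \<rho> u R (A \<inter> B) \<le> \<rho> (F1 \<inter> F2) - sum u (T1 \<inter> T2)"
    using 1 2 by (intro hall_slack_le[OF assms(1,2)]) (auto simp: EB_Int)
  moreover have "\<rho> (F1 \<union> F2) + \<rho> (F1 \<inter> F2) \<le> \<rho> F1 + \<rho> F2"
    using submodular_onD[OF assms(3) 1(2) 2(2)] .
  moreover have "sum u (T1 \<union> T2) + sum u (T1 \<inter> T2) = sum u T1 + sum u T2"
    using 1(1) 2(1) finite_subset[OF _ assms(2)] by (intro sum.union_inter) auto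
  ultimately show "hall_slack E \<rho> u R (A \<union> B) + hall_slack E \<rho> u R (A \<inter> B)
      \<le> hall_slack E \<rho> u R A + hall_slack E \<rho> u R B"
    using 1(4) 2(4) by linarith
qed

lemma hall_slack_row_vector:
  assumes E: "finite E" and R: "finite R" "k \<notin> R"
    and \<rho>: "submodular_on E \<rho>" "\<rho> {} = 0" and u: "0 \<le> u k" "hall_condition E \<rho> u (insert k R)"
  obtains z where "\<forall>e. 0 \<le> z e" "\<forall>e. e \<notin> EB E {k} \<longrightarrow> z e = 0"
    "\<forall>A\<subseteq>EB E {k}. sum z A \<le> hall_slack E \<rho> u R A" "sum z (EB E {k}) = u k"
proof -
  define X where "X = EB E {k}"
  define \<sigma> where "\<sigma> = hall_slack E \<rho> u R"
  have X: "X \<subseteq> E" "finite X"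
    using EB_subset finite_subset[OF _ E] by (auto simp: X_def)
  have "\<sigma> {} = 0"
    unfolding \<sigma>_def using E R(1) _ \<rho>(2)
    by (rule hall_slack_empty) (rule hall_condition_subset[OF u(2)], blast)
  moreover have "mono_on (Pow X) \<sigma>"
    unfolding \<sigma>_def using hall_slack_mono[OF E R(1)] by (rule mono_on_subset) (use X(1) in auto)
  moreover have "submodular_on X \<sigma>"
    unfolding \<sigma>_def using hall_slack_submodular[OF E R(1) \<rho>(1)] X(1) by (rule submodular_on_subset)
  moreover have "u k \<le> \<sigma> X"
  proof -
    obtain T F where TF: "T \<subseteq> R" "F \<subseteq> E" "EB E T \<union> X \<subseteq> F" "\<sigma> X = \<rho> F - sum u T"
      unfolding \<sigma>_def using E R(1) X(1) by (rule hall_slack_attained)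
    have "EB E (insert k T) \<subseteq> F"
      using TF(3) EB_Un[of E "{k}" T] by (simp add: X_def)
    then have "sum u (insert k T) \<le> \<rho> F"
      using TF(1,2) by (intro hall_conditionD[OF u(2)]) auto
    moreover have "sum u (insert k T) = u k + sum u T"
      using TF(1) R finite_subset by (intro sum.insert) auto
    ultimately show ?thesis
      using TF(4) by simp
  qed
  ultimately have "\<exists>z. (\<forall>e. 0 \<le> z e) \<and> (\<forall>e. e \<notin> X \<longrightarrow> z e = 0) \<and>
      (\<forall>A\<subseteq>X. sum z A \<le> \<sigma> A) \<and> sum z X = u k"
    using u(1) by (intro polymatroid_vector_with_sum[OF X(2)])
  then show ?thesis
    using that unfolding X_def \<sigma>_def by blast
qed

lemma hall_condition_diff_row:
  assumes "finite E" "finite R" "\<forall>e. e \<notin> X \<longrightarrow> z e = 0" "\<forall>A\<subseteq>X. sum z A \<le> hall_slack E \<rho> u R A"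
  shows "hall_condition E (\<lambda>F. \<rho> F - sum z F) u R"
  unfolding hall_condition_def
proof (intro allI impI)
  fix T F assume TF: "T \<subseteq> R" "F \<subseteq> E" "EB E T \<subseteq> F"
  have "hall_slack E \<rho> u R (F \<inter> X) \<le> \<rho> F - sum u T"
    using TF by (intro hall_slack_le[OF assms(1,2)]) auto
  moreover have "sum z F = sum z (F \<inter> X)"
    using assms(3) finite_subset[OF TF(2) assms(1)] by (intro sum.mono_neutral_right) auto
  moreover have "sum z (F \<inter> X) \<le> hall_slack E \<rho> u R (F \<inter> X)"
    using assms(4) by blast
  ultimately show "sum u T \<le> \<rho> F - sum z F"
    by simp
qed

text \<open>Induction on R: for R = insert k R', the best bound left for the row of k,
  hall_slack E \<rho> u R', is a polymatroid on the row E_k; a vector of it with sum u k is given to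
  row k, and the rows of R' are filled inside \<rho> minus that vector.\<close>
lemma rado_submodular:
  fixes \<rho> :: "(nat \<times> nat) set \<Rightarrow> real" and u :: "nat \<Rightarrow> real"
  assumes "finite E" "finite R" "submodular_on E \<rho>" "\<rho> {} = 0" "\<forall>k\<in>R. 0 \<le> u k"
    and "hall_condition E \<rho> u R"
  shows "\<exists>y. (\<forall>e. 0 \<le> y e) \<and> (\<forall>e. e \<notin> EB E R \<longrightarrow> y e = 0) \<and>
             (\<forall>F\<subseteq>E. sum y F \<le> \<rho> F) \<and> (\<forall>k\<in>R. sum y (EB E {k}) = u k)"
  using assms(2-6)
proof (induction R arbitrary: \<rho> rule: finite_induct)
  case empty
  have "0 \<le> \<rho> F" if "F \<subseteq> E" for F
    using hall_conditionD[OF empty.prems(4), of "{}" F] that by simp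
  then show ?case
    by (intro exI[of _ "\<lambda>_. 0"]) auto
next
  case (insert k R)
  obtain z where z: "\<forall>e. 0 \<le> z e" "\<forall>e. e \<notin> EB E {k} \<longrightarrow> z e = 0"
      "\<forall>A\<subseteq>EB E {k}. sum z A \<le> hall_slack E \<rho> u R A" "sum z (EB E {k}) = u k"
    by (rule hall_slack_row_vector[OF assms(1) insert.hyps insert.prems(1,2)]) (use insert.prems(3,4) in auto)
  have "\<exists>y. (\<forall>e. 0 \<le> y e) \<and> (\<forall>e. e \<notin> EB E R \<longrightarrow> y e = 0) \<and>
      (\<forall>F\<subseteq>E. sum y F \<le> \<rho> F - sum z F) \<and> (\<forall>l\<in>R. sum y (EB E {l}) = u l)"
    using insert.prems(2,3) hall_condition_diff_row[OF assms(1) insert.hyps(1) z(2,3)]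
      submodular_on_diff_sum[OF assms(1) insert.prems(1)]
    by (intro insert.IH) auto
  then obtain y where y: "\<forall>e. 0 \<le> y e" "\<forall>e. e \<notin> EB E R \<longrightarrow> y e = 0"
      "\<forall>F\<subseteq>E. sum y F \<le> \<rho> F - sum z F" "\<forall>l\<in>R. sum y (EB E {l}) = u l"
    by blast
  have row_k: "sum y (EB E {k}) = 0"
    using y(2) EB_singleton_disjoint[OF insert.hyps(2), of E] by (intro sum.neutral) auto
  have rows_R: "sum z (EB E {l}) = 0" if "l \<in> R" for l
    using z(2) that insert.hyps(2) by (intro sum.neutral) (auto simp: EB_def)
  show ?case
  proof (intro exI[of _ "\<lambda>e. z e + y e"] conjI allI impI ballI)
    fix e assume "e \<notin> EB E (insert k R)"
    then have "e \<notin> EB E {k}" "e \<notin> EB E R"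
      by (auto simp: EB_def)
    then show "z e + y e = 0"
      using z(2) y(2) by (simp del: split_paired_All)
  next
    fix F assume "F \<subseteq> E"
    then have "sum y F \<le> \<rho> F - sum z F"
      using y(3) by blast
    then show "sum (\<lambda>e. z e + y e) F \<le> \<rho> F"
      by (simp add: sum.distrib)
  next
    fix l assume "l \<in> insert k R"
    then show "sum (\<lambda>e. z e + y e) (EB E {l}) = u l"
      using z(4) row_k y(4) rows_R by (auto simp: sum.distrib)
  qed (use z(1) y(1) add_nonneg_nonneg in blast)
qed

section \<open>Convolution with the demands\<close>

definition convolution :: "('a set \<Rightarrow> real) \<Rightarrow> ('a \<Rightarrow> ereal) \<Rightarrow> 'a set \<Rightarrow> ereal" where
  "convolution a d R = Min ((\<lambda>T. ereal (a T) + sum d (R - T)) ` Pow R)"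

lemma convolution_le:
  "finite R \<Longrightarrow> T \<subseteq> R \<Longrightarrow> convolution a d R \<le> ereal (a T) + sum d (R - T)"
  unfolding convolution_def by (intro Min_le) auto

lemma convolution_attained:
  assumes "finite R"
  obtains T where "T \<subseteq> R" "convolution a d R = ereal (a T) + sum d (R - T)"
proof -
  have "convolution a d R \<in> (\<lambda>T. ereal (a T) + sum d (R - T)) ` Pow R"
    unfolding convolution_def using assms by (intro Min_in) auto
  then show ?thesis
    using that by auto
qed

lemma convolution_empty: "convolution a d {} = ereal (a {})"
  by (simp add: convolution_def)

lemma convolution_singleton_le: "convolution a d {k} \<le> ereal (a {}) + d k"
  using convolution_le[of "{k}" "{}" a d] by simp

lemma convolution_real:
  assumes "finite R" "\<forall>k\<in>R. 0 \<le> d k"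
  shows "convolution a d R = ereal (real_of_ereal (convolution a d R))"
proof -
  obtain T where T: "T \<subseteq> R" "convolution a d R = ereal (a T) + sum d (R - T)"
    using convolution_attained[OF assms(1)] .
  have "0 \<le> sum d (R - T)"
    using assms(2) by (intro sum_nonneg) auto
  then have "ereal (a T) \<le> convolution a d R"
    using T(2) by (metis add.right_neutral add_left_mono)
  moreover have "convolution a d R \<le> ereal (a R)"
    using convolution_le[OF assms(1), of R] by simp
  ultimately have "\<bar>convolution a d R\<bar> \<noteq> \<infinity>"
    by auto
  then show ?thesis
    by (simp add: ereal_real)
qed

lemma convolution_le_add_diff:
  assumes "finite B" "A \<subseteq> B"
  shows "convolution a d B \<le> convolution a d A + sum d (B - A)"
proof -
  have "finite A"
    using assms finite_subset by blast
  then obtain T where T: "T \<subseteq> A" "convolution a d A = ereal (a T) + sum d (A - T)"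
    by (rule convolution_attained)
  have "sum d (B - T) = sum d (A - T) + sum d (B - A)"
  proof -
    have "B - T = (A - T) \<union> (B - A)"
      using T(1) assms(2) by auto
    moreover have "sum d ((A - T) \<union> (B - A)) = sum d (A - T) + sum d (B - A)"
      using assms(1) \<open>finite A\<close> by (intro sum.union_disjoint) auto
    ultimately show ?thesis
      by simp
  qed
  moreover have "convolution a d B \<le> ereal (a T) + sum d (B - T)"
    using T(1) assms by (intro convolution_le) auto
  ultimately show ?thesis
    using T(2) by (simp add: add.assoc)
qed

lemma convolution_submodular:
  assumes "finite A" "finite B" "submodular_on (A \<union> B) a"
  shows "convolution a d (A \<union> B) + convolution a d (A \<inter> B) \<le> convolution a d A + convolution a d B"
proof -
  obtain T1 where T1: "T1 \<subseteq> A" "convolution a d A = ereal (a T1) + sum d (A - T1)"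
    using convolution_attained[OF assms(1)] .
  obtain T2 where T2: "T2 \<subseteq> B" "convolution a d B = ereal (a T2) + sum d (B - T2)"
    using convolution_attained[OF assms(2)] .
  let ?P = "(A \<union> B) - (T1 \<union> T2)" and ?Q = "(A \<inter> B) - (T1 \<inter> T2)"
  have sums: "sum d ?P + sum d ?Q = sum d (A - T1) + sum d (B - T2)"
  proof -
    have "?P \<union> ?Q = (A - T1) \<union> (B - T2)" "?P \<inter> ?Q = (A - T1) \<inter> (B - T2)"
      using T1(1) T2(1) by auto
    then show ?thesis
      using assms(1,2) sum.union_inter[of ?P ?Q d] sum.union_inter[of "A - T1" "B - T2" d] by simp
  qed
  have "convolution a d (A \<union> B) + convolution a d (A \<inter> B)
      \<le> (ereal (a (T1 \<union> T2)) + sum d ?P) + (ereal (a (T1 \<inter> T2)) + sum d ?Q)"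
    using T1(1) T2(1) assms(1,2) by (intro add_mono convolution_le) auto
  also have "\<dots> = ereal (a (T1 \<union> T2) + a (T1 \<inter> T2)) + (sum d ?P + sum d ?Q)"
    by (simp add: ac_simps flip: plus_ereal.simps(1))
  also have "\<dots> \<le> ereal (a T1 + a T2) + (sum d (A - T1) + sum d (B - T2))"
    unfolding sums using submodular_onD[OF assms(3)] T1(1) T2(1) by (intro add_right_mono) auto
  also have "\<dots> = convolution a d A + convolution a d B"
    unfolding T1(2) T2(2) by (cases "sum d (A - T1)"; cases "sum d (B - T2)") auto
  finally show ?thesis .
qed

lemma convolution_mono_weights:
  assumes "finite R" "\<forall>k\<in>R. d' k \<le> d k"
  shows "convolution a d' R \<le> convolution a d R"
proof -
  obtain T where T: "T \<subseteq> R" "convolution a d R = ereal (a T) + sum d (R - T)"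
    using convolution_attained[OF assms(1)] .
  have "sum d' (R - T) \<le> sum d (R - T)"
    using assms(2) by (intro sum_mono) auto
  then show ?thesis
    using convolution_le[OF assms(1) T(1), of a d'] T(2) by (metis add_left_mono order_trans)
qed

lemma convolution_cong:
  assumes "\<forall>T\<subseteq>R. a' T = a T" "\<forall>k\<in>R. d' k = d k"
  shows "convolution a' d' R = convolution a d R"
proof -
  have "(\<lambda>T. ereal (a' T) + sum d' (R - T)) ` Pow R = (\<lambda>T. ereal (a T) + sum d (R - T)) ` Pow R"
    using assms by (intro image_cong refl) (auto intro!: sum.cong)
  then show ?thesis
    by (simp add: convolution_def)
qed

lemma ereal_diff_add_cancel: "ereal (x - \<delta>) + s + ereal \<delta> = ereal x + s"
  by (cases s) auto

lemma ereal_add_diff_add_cancel: "c \<noteq> -\<infinity> \<Longrightarrow> ereal x + ((c - ereal \<delta>) + s) + ereal \<delta> = ereal x + (c + s)"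
  by (cases c; cases s) auto

lemma convolution_shift_le:
  assumes "finite R" "i \<in> R" "d i \<noteq> -\<infinity>"
    and "\<forall>T\<subseteq>R. a' T = a T - (if i \<in> T then \<delta> else 0)"
  shows "convolution a' (d(i := d i - ereal \<delta>)) R + ereal \<delta> \<le> convolution a d R"
proof -
  let ?d' = "d(i := d i - ereal \<delta>)"
  obtain T where T: "T \<subseteq> R" "convolution a d R = ereal (a T) + sum d (R - T)"
    using convolution_attained[OF assms(1)] .
  have "ereal (a' T) + sum ?d' (R - T) + ereal \<delta> = ereal (a T) + sum d (R - T)"
  proof (cases "i \<in> T")
    case True
    then have "sum ?d' (R - T) = sum d (R - T)"
      by (intro sum.cong) auto
    moreover have "a' T = a T - \<delta>"
      using assms(4) T(1) True by simp
    ultimately show ?thesis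
      by (simp only: ereal_diff_add_cancel)
  next
    case False
    then have iRT: "i \<in> R - T"
      using assms(2) by blast
    have "sum ?d' (R - T) = ?d' i + sum ?d' (R - T - {i})"
      using assms(1) iRT by (intro sum.remove) auto
    also have "sum ?d' (R - T - {i}) = sum d (R - T - {i})"
      by (intro sum.cong) auto
    finally have "sum ?d' (R - T) = (d i - ereal \<delta>) + sum d (R - T - {i})"
      by simp
    moreover have "sum d (R - T) = d i + sum d (R - T - {i})"
      using assms(1) iRT by (intro sum.remove) auto
    moreover have "a' T = a T"
      using assms(4) T(1) False by simp
    ultimately show ?thesis
      by (simp only: ereal_add_diff_add_cancel[OF assms(3)])
  qed
  moreover have "convolution a' ?d' R + ereal \<delta> \<le> ereal (a' T) + sum ?d' (R - T) + ereal \<delta>"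
    using convolution_le[OF assms(1) T(1)] by (rule add_right_mono)
  ultimately show ?thesis
    using T(2) by simp
qed

section \<open>Demands\<close>

lemma dem_nonneg: "0 \<le> c k \<Longrightarrow> ereal (p k) \<le> BB k \<Longrightarrow> 0 \<le> dem BB v p c k"
  by (cases "BB k") (auto simp: dem_def)

lemma dem_pay:
  assumes c: "0 \<le> c i" and p: "ereal (p i) \<le> BB i" and \<delta>: "0 \<le> \<delta>" "ereal \<delta> \<le> dem BB v p c i"
  shows "dem BB v (p(i := p i + c i * \<delta>)) c i = dem BB v p c i - ereal \<delta>"
    and "ereal (p i + c i * \<delta>) \<le> BB i"
proof -
  consider (zero) "c i = 0" | (active) "0 < c i" "c i < v i" | (inactive) "c i \<noteq> 0" "\<not> c i < v i"
    using c by force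
  then have "dem BB v (p(i := p i + c i * \<delta>)) c i = dem BB v p c i - ereal \<delta> \<and> ereal (p i + c i * \<delta>) \<le> BB i"
  proof cases
    case active
    show ?thesis
    proof (cases "BB i")
      case (real b)
      have "\<delta> \<le> (b - p i) / c i"
        using \<delta>(2) active real by (simp add: dem_def)
      then have "c i * \<delta> \<le> b - p i"
        using active by (simp add: pos_le_divide_eq mult.commute)
      moreover have "(b - (p i + c i * \<delta>)) / c i = (b - p i) / c i - \<delta>"
        using active by (simp add: field_simps)
      ultimately show ?thesis
        using active real by (simp add: dem_def)
    qed (use active p in \<open>auto simp: dem_def\<close>)
  next
    case inactive
    then have "\<delta> = 0"
      using \<delta> by (simp add: dem_def)
    then show ?thesis
      using inactive p by (simp add: dem_def)
  qed (use p in \<open>simp add: dem_def\<close>)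
  then show "dem BB v (p(i := p i + c i * \<delta>)) c i = dem BB v p c i - ereal \<delta>"
    and "ereal (p i + c i * \<delta>) \<le> BB i"
    by auto
qed

lemma dem_raise_price:
  assumes c: "0 \<le> c l" and p: "ereal (p l) \<le> BB l" and \<epsilon>: "0 < \<epsilon>"
  shows "dem BB v p (c(l := c l + \<epsilon>)) l \<le> dem BB v p c l"
proof (cases "c l = 0 \<or> \<not> c l < v l")
  case False
  then have c_pos: "0 < c l" "c l < v l"
    using c by auto
  show ?thesis
  proof (cases "BB l")
    case (real b)
    have "(b - p l) / (c l + \<epsilon>) \<le> (b - p l) / c l"
      using p real c_pos \<epsilon> by (intro divide_left_mono) auto
    then show ?thesis
      using real c_pos \<epsilon> dem_nonneg[of c l p BB v] c p by (auto simp: dem_def)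
  qed (use p c_pos \<epsilon> in \<open>auto simp: dem_def\<close>)
qed (use c \<epsilon> in \<open>auto simp: dem_def\<close>)

section \<open>The modified market\<close>

lemma sum_EB:
  assumes "finite E" "finite T"
  shows "sum g (EB E T) = (\<Sum>k\<in>T. sum g (EB E {k}))"
proof -
  have "sum g (EB E T) = (\<Sum>k\<in>T. sum g {e \<in> EB E T. fst e = k})"
    using assms by (intro sum.group[symmetric]) (auto simp: EB_def)
  also have "\<dots> = (\<Sum>k\<in>T. sum g (EB E {k}))"
    by (intro sum.cong refl arg_cong[where f = "sum g"]) (auto simp: EB_def)
  finally show ?thesis .
qed

locale market =
  fixes n m :: nat and E0 :: "(nat \<times> nat) set" and f :: "nat \<Rightarrow> (nat \<times> nat) set \<Rightarrow> real"
  assumes E0: "E0 \<subseteq> {1..n} \<times> {1..m}"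
    and f_nonneg: "\<forall>j\<in>{1..m}. \<forall>F. F \<subseteq> ES E0 j \<longrightarrow> 0 \<le> f j F"
    and f_empty: "\<forall>j\<in>{1..m}. f j {} = 0"
    and f_mono: "\<forall>j\<in>{1..m}. \<forall>F G. F \<subseteq> G \<and> G \<subseteq> ES E0 j \<longrightarrow> f j F \<le> f j G"
    and f_submod: "\<forall>j\<in>{1..m}. \<forall>F G. F \<subseteq> ES E0 j \<and> G \<subseteq> ES E0 j \<longrightarrow>
                       f j (F \<union> G) + f j (F \<inter> G) \<le> f j F + f j G"
begin

abbreviation "edges \<equiv> Eall n m E0"
abbreviation "buyers \<equiv> Nset n m"
abbreviation "rank \<equiv> ftot n m E0 f"
abbreviation "seller_rank \<equiv> fext n E0 f"

lemma finite_edges: "finite edges"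
proof -
  have "edges = E0 \<union> (\<lambda>j. (n + j, j)) ` Mset m"
    by (auto simp: Eall_def)
  moreover have "finite E0"
    using E0 by (rule finite_subset) auto
  ultimately show ?thesis
    by (simp add: Mset_def)
qed

lemma finite_buyers: "finite buyers"
  by (simp add: Nset_def)

lemma edge_seller: "e \<in> edges \<Longrightarrow> snd e \<in> Mset m"
  using E0 by (auto simp: Eall_def Mset_def)

lemma ES_edges_subset: "F \<subseteq> ES edges j \<Longrightarrow> F \<subseteq> edges"
  by (auto simp: ES_def)

lemma subset_ES_E0:
  assumes "j \<in> Mset m" "F \<subseteq> ES edges j" "(n + j, j) \<notin> F"
  shows "F \<subseteq> ES E0 j"
  using assms E0 by (auto simp: ES_def Eall_def)

lemma seller_rank_empty: "j \<in> Mset m \<Longrightarrow> seller_rank j {} = 0"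
  using f_empty by (simp add: fext_def Mset_def)

lemma seller_rank_nonneg: "j \<in> Mset m \<Longrightarrow> F \<subseteq> ES edges j \<Longrightarrow> 0 \<le> seller_rank j F"
  using f_nonneg subset_ES_E0[of j F] by (auto simp: fext_def Mset_def)

lemma seller_rank_mono:
  assumes j: "j \<in> Mset m" and FG: "F \<subseteq> G" "G \<subseteq> ES edges j"
  shows "seller_rank j F \<le> seller_rank j G"
proof -
  have f_mono_j: "f j A \<le> f j B" if "A \<subseteq> B" "B \<subseteq> ES E0 j" for A B
    using f_mono j that by (auto simp: Mset_def)
  show ?thesis
  proof (cases "(n + j, j) \<in> G")
    case True
    then show ?thesis
      using f_mono_j subset_ES_E0[OF j, of F] FG by (cases "(n + j, j) \<in> F") (auto simp: fext_def)
  next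
    case False
    then show ?thesis
      using f_mono_j subset_ES_E0[OF j, of G] FG by (auto simp: fext_def)
  qed
qed

lemma seller_rank_submodular:
  assumes j: "j \<in> Mset m" and FG: "F \<subseteq> ES edges j" "G \<subseteq> ES edges j"
  shows "seller_rank j (F \<union> G) + seller_rank j (F \<inter> G) \<le> seller_rank j F + seller_rank j G"
proof -
  let ?v = "(n + j, j)"
  have f_mono_j: "f j A \<le> f j B" if "A \<subseteq> B" "B \<subseteq> ES E0 j" for A B
    using f_mono j that by (auto simp: Mset_def)
  consider "?v \<in> F" "?v \<in> G" | "?v \<in> F" "?v \<notin> G" | "?v \<notin> F" "?v \<in> G" | "?v \<notin> F" "?v \<notin> G"
    by blast
  then show ?thesis
  proof cases
    case 1
    then show ?thesis
      by (simp add: fext_def)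
  next
    case 2
    then show ?thesis
      using f_mono_j[of "F \<inter> G" G] subset_ES_E0[OF j FG(2)] by (auto simp: fext_def)
  next
    case 3
    then show ?thesis
      using f_mono_j[of "F \<inter> G" F] subset_ES_E0[OF j FG(1)] by (auto simp: fext_def)
  next
    case 4
    then show ?thesis
      using f_submod j subset_ES_E0[OF j FG(1)] subset_ES_E0[OF j FG(2)] by (auto simp: fext_def Mset_def)
  qed
qed

lemma rank_empty: "rank {} = 0"
  by (simp add: ftot_def seller_rank_empty)

lemma rank_nonneg: "0 \<le> rank F"
  unfolding ftot_def by (intro sum_nonneg seller_rank_nonneg) auto

lemma rank_mono: "mono_on (Pow edges) rank"
  unfolding ftot_def by (intro mono_onI sum_mono seller_rank_mono) auto

lemma rank_submodular: "submodular_on edges rank"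
  unfolding submodular_on_def
proof (intro allI impI)
  fix F G
  let ?F = "\<lambda>j. F \<inter> ES edges j" and ?G = "\<lambda>j. G \<inter> ES edges j"
  have "rank (F \<union> G) + rank (F \<inter> G) = (\<Sum>j\<in>Mset m. seller_rank j (?F j \<union> ?G j) + seller_rank j (?F j \<inter> ?G j))"
    unfolding ftot_def sum.distrib[symmetric] by (intro sum.cong refl arg_cong2[where f = "(+)"]) (auto intro!: arg_cong[where f = "seller_rank _"])
  also have "\<dots> \<le> (\<Sum>j\<in>Mset m. seller_rank j (?F j) + seller_rank j (?G j))"
    by (intro sum_mono seller_rank_submodular) auto
  also have "\<dots> = rank F + rank G"
    by (simp add: ftot_def sum.distrib)
  finally show "rank (F \<union> G) + rank (F \<inter> G) \<le> rank F + rank G" .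
qed

lemma rank_ES:
  assumes j: "j \<in> Mset m" and F: "F \<subseteq> ES edges j"
  shows "rank F = seller_rank j F"
proof -
  have "rank F = seller_rank j (F \<inter> ES edges j) + (\<Sum>j'\<in>Mset m - {j}. seller_rank j' (F \<inter> ES edges j'))"
    unfolding ftot_def using j by (intro sum.remove) (auto simp: Mset_def)
  moreover have "F \<inter> ES edges j' = {}" if "j' \<noteq> j" for j'
    using F that by (auto simp: ES_def)
  ultimately show ?thesis
    using F seller_rank_empty by (simp add: Int_absorb2)
qed

lemma sum_by_seller:
  assumes "F \<subseteq> edges"
  shows "sum g F = (\<Sum>j\<in>Mset m. sum g (F \<inter> ES edges j))"
proof -
  have "sum g F = (\<Sum>j\<in>Mset m. sum g {e \<in> F. snd e = j})"
    using assms finite_subset[OF assms finite_edges] edge_seller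
    by (intro sum.group[symmetric]) (auto simp: Mset_def)
  also have "\<dots> = (\<Sum>j\<in>Mset m. sum g (F \<inter> ES edges j))"
    using assms by (intro sum.cong refl arg_cong[where f = "sum g"]) (auto simp: ES_def)
  finally show ?thesis .
qed

lemma inP_iff:
  "inP n m E0 f w \<longleftrightarrow>
     (\<forall>e\<in>edges. 0 \<le> w e) \<and> (\<forall>e. e \<notin> edges \<longrightarrow> w e = 0) \<and> (\<forall>F\<subseteq>edges. sum w F \<le> rank F)"
proof
  assume w: "inP n m E0 f w"
  have "sum w F \<le> rank F" if "F \<subseteq> edges" for F
  proof -
    have "sum w F = (\<Sum>j\<in>Mset m. sum w (F \<inter> ES edges j))"
      using that by (rule sum_by_seller)
    also have "\<dots> \<le> (\<Sum>j\<in>Mset m. seller_rank j (F \<inter> ES edges j))"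
      using w by (intro sum_mono) (auto simp: inP_def inPj_def)
    finally show ?thesis
      by (simp add: ftot_def)
  qed
  then show "(\<forall>e\<in>edges. 0 \<le> w e) \<and> (\<forall>e. e \<notin> edges \<longrightarrow> w e = 0) \<and> (\<forall>F\<subseteq>edges. sum w F \<le> rank F)"
    using w by (auto simp: inP_def)
next
  assume "(\<forall>e\<in>edges. 0 \<le> w e) \<and> (\<forall>e. e \<notin> edges \<longrightarrow> w e = 0) \<and> (\<forall>F\<subseteq>edges. sum w F \<le> rank F)"
  then show "inP n m E0 f w"
    using rank_ES ES_edges_subset by (auto simp: inP_def inPj_def ES_def)
qed

section \<open>The clinching invariant\<close>

definition residual :: "(nat \<times> nat \<Rightarrow> real) \<Rightarrow> nat set \<Rightarrow> real" where
  "residual w T = rank (EB edges T) - (\<Sum>i\<in>T. sum w (EB edges {i}))"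

lemma residual_eq: "finite T \<Longrightarrow> residual w T = rank (EB edges T) - sum w (EB edges T)"
  unfolding residual_def using sum_EB[OF finite_edges, of T w] by simp

lemma residual_empty: "residual w {} = 0"
  by (simp add: residual_def rank_empty)

lemma residual_submodular:
  assumes "finite A"
  shows "submodular_on A (residual w)"
  unfolding submodular_on_def
proof (intro allI impI)
  fix T1 T2 assume "T1 \<subseteq> A" "T2 \<subseteq> A"
  then have "(\<Sum>i\<in>T1 \<union> T2. sum w (EB edges {i})) + (\<Sum>i\<in>T1 \<inter> T2. sum w (EB edges {i})) =
      (\<Sum>i\<in>T1. sum w (EB edges {i})) + (\<Sum>i\<in>T2. sum w (EB edges {i}))"
    using finite_subset[OF _ assms] by (intro sum.union_inter) auto
  moreover have "rank (EB edges T1 \<union> EB edges T2) + rank (EB edges T1 \<inter> EB edges T2)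
      \<le> rank (EB edges T1) + rank (EB edges T2)"
    using rank_submodular by (rule submodular_onD) (rule EB_subset)+
  ultimately show "residual w (T1 \<union> T2) + residual w (T1 \<inter> T2) \<le> residual w T1 + residual w T2"
    unfolding residual_def EB_Un EB_Int by linarith
qed

lemma residual_add_row:
  assumes "\<forall>e. e \<notin> EB edges {i} \<longrightarrow> \<xi> e = 0" "finite T"
  shows "residual (\<lambda>e. w e + \<xi> e) T = residual w T - (if i \<in> T then sum \<xi> (EB edges {i}) else 0)"
proof -
  have "sum \<xi> (EB edges {k}) = 0" if "k \<noteq> i" for k
    using assms(1) that by (intro sum.neutral) (auto simp: EB_def)
  then have "(\<Sum>k\<in>T. sum \<xi> (EB edges {k})) = (\<Sum>k\<in>T. if k = i then sum \<xi> (EB edges {i}) else 0)"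
    by (intro sum.cong) auto
  also have "\<dots> = (if i \<in> T then sum \<xi> (EB edges {i}) else 0)"
    using assms(2) by (simp add: sum.delta')
  finally show ?thesis
    by (simp add: residual_def sum.distrib)
qed

definition residual_bound :: "(nat \<times> nat \<Rightarrow> real) \<Rightarrow> (nat \<Rightarrow> ereal) \<Rightarrow> bool" where
  "residual_bound w d \<longleftrightarrow> (\<forall>R F. R \<subseteq> buyers \<longrightarrow> F \<subseteq> edges \<longrightarrow> EB edges R \<subseteq> F \<longrightarrow>
                             convolution (residual w) d R \<le> ereal (rank F - sum w F))"

lemma residual_boundD:
  "residual_bound w d \<Longrightarrow> R \<subseteq> buyers \<Longrightarrow> F \<subseteq> edges \<Longrightarrow> EB edges R \<subseteq> F \<Longrightarrow>
     convolution (residual w) d R \<le> ereal (rank F - sum w F)"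
  by (simp add: residual_bound_def)

lemma residual_bound_mono_weights:
  assumes "residual_bound w d" "\<forall>k\<in>buyers. d' k \<le> d k"
  shows "residual_bound w d'"
  unfolding residual_bound_def
proof (intro allI impI)
  fix R F assume "R \<subseteq> buyers" "F \<subseteq> edges" "EB edges R \<subseteq> F"
  moreover from this have "convolution (residual w) d' R \<le> convolution (residual w) d R"
    using assms(2) finite_subset[OF _ finite_buyers] by (intro convolution_mono_weights) auto
  ultimately show "convolution (residual w) d' R \<le> ereal (rank F - sum w F)"
    using residual_boundD[OF assms(1)] order_trans by blast
qed

text \<open>Under the invariant, the minimum defining the convolution may range over all T \<subseteq> N.\<close>
lemma convolution_le_residual:
  assumes "residual_bound w d" "\<forall>k\<in>buyers. 0 \<le> d k" "A \<subseteq> buyers" "T \<subseteq> buyers"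
  shows "convolution (residual w) d A \<le> ereal (residual w T) + sum d (A - T)"
proof -
  have fin: "finite A" "finite T"
    using assms(3,4) finite_subset[OF _ finite_buyers] by auto
  have "convolution (residual w) d A \<le> convolution (residual w) d (T \<inter> A) + sum d (A - T \<inter> A)"
    using fin(1) by (rule convolution_le_add_diff) auto
  also have "A - T \<inter> A = A - T"
    by blast
  also have "convolution (residual w) d (T \<inter> A) \<le> ereal (residual w T)"
    using residual_boundD[OF assms(1), of "T \<inter> A" "EB edges T"] assms(3) residual_eq[OF fin(2)]
    by (auto simp: EB_subset EB_mono)
  finally show ?thesis
    by (simp add: add_right_mono)
qed

lemma convolution_residual_mono:
  assumes "residual_bound w d" "\<forall>k\<in>buyers. 0 \<le> d k"
  shows "mono_on (Pow buyers) (convolution (residual w) d)"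
proof (rule mono_onI)
  fix A B assume AB: "A \<in> Pow buyers" "B \<in> Pow buyers" "A \<le> B"
  then have "finite B"
    using finite_subset[OF _ finite_buyers] by auto
  then obtain T where T: "T \<subseteq> B" "convolution (residual w) d B = ereal (residual w T) + sum d (B - T)"
    by (rule convolution_attained)
  have "convolution (residual w) d A \<le> ereal (residual w T) + sum d (A - T)"
    using AB T(1) by (intro convolution_le_residual[OF assms]) auto
  also have "\<dots> \<le> ereal (residual w T) + sum d (B - T)"
    using AB assms(2) \<open>finite B\<close> by (intro add_left_mono sum_mono2) auto
  finally show "convolution (residual w) d A \<le> convolution (residual w) d B"
    using T(2) by simp
qed

lemma Pwd_iff:
  assumes "inP n m E0 f w"
  shows "y \<in> Pwd n m E0 f w d \<longleftrightarrow>
     (\<forall>e\<in>edges. 0 \<le> y e) \<and> (\<forall>e. e \<notin> edges \<longrightarrow> y e = 0) \<and>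
     (\<forall>F\<subseteq>edges. sum w F + sum y F \<le> rank F) \<and> (\<forall>k\<in>buyers. ereal (sum y (EB edges {k})) \<le> d k)"
  using assms by (auto simp: Pwd_def inP_iff sum.distrib add_nonneg_nonneg)

lemma zero_in_Pwd:
  assumes "inP n m E0 f w" "\<forall>k\<in>buyers. 0 \<le> d k"
  shows "(\<lambda>_. 0) \<in> Pwd n m E0 f w d"
  using assms by (simp add: Pwd_iff inP_iff zero_ereal_def)

lemma convolution_residual_vector:
  assumes "residual_bound w d" "\<forall>k\<in>buyers. 0 \<le> d k" "R \<subseteq> buyers"
  shows "\<exists>u. (\<forall>k. 0 \<le> u k) \<and> (\<forall>A\<subseteq>R. ereal (sum u A) \<le> convolution (residual w) d A) \<and>
             ereal (sum u R) = convolution (residual w) d R"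
proof -
  let ?G = "convolution (residual w) d"
  define g where "g A = real_of_ereal (?G A)" for A
  have fin: "finite A" if "A \<subseteq> R" for A
    using that assms(3) finite_subset[OF _ finite_buyers] by blast
  have G_eq: "?G A = ereal (g A)" if "A \<subseteq> R" for A
    unfolding g_def using fin[OF that] assms(2,3) that by (intro convolution_real) auto
  have "g {} = 0"
    using G_eq[of "{}"] by (simp add: convolution_empty residual_empty)
  moreover have "mono_on (Pow R) g"
  proof (rule mono_onI)
    fix A B assume "A \<in> Pow R" "B \<in> Pow R" "A \<le> B"
    then show "g A \<le> g B"
      using mono_onD[OF convolution_residual_mono[OF assms(1,2)], of A B] assms(3) G_eq by auto
  qed
  moreover have "submodular_on R g"
    unfolding submodular_on_def
  proof (intro allI impI)
    fix A B assume "A \<subseteq> R" "B \<subseteq> R"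
    moreover have "submodular_on (A \<union> B) (residual w)"
      using fin \<open>A \<subseteq> R\<close> \<open>B \<subseteq> R\<close> by (intro residual_submodular) auto
    ultimately have "?G (A \<union> B) + ?G (A \<inter> B) \<le> ?G A + ?G B"
      using fin by (intro convolution_submodular) auto
    then show "g (A \<union> B) + g (A \<inter> B) \<le> g A + g B"
      using G_eq \<open>A \<subseteq> R\<close> \<open>B \<subseteq> R\<close> by (simp add: le_infI1)
  qed
  ultimately obtain u where "\<forall>e. 0 \<le> u e" "\<forall>A\<subseteq>R. sum u A \<le> g A" "sum u R = g R"
    using polymatroid_base_exists[OF fin] by blast
  then show ?thesis
    using G_eq by (intro exI[of _ u]) auto
qed

lemma hall_condition_residual:
  assumes bound: "residual_bound w d" and R: "R \<subseteq> buyers"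
    and u: "\<forall>A\<subseteq>R. ereal (sum u A) \<le> convolution (residual w) d A"
  shows "hall_condition edges (\<lambda>F. rank F - sum w F) u R"
  unfolding hall_condition_def
proof (intro allI impI)
  fix T F assume T: "T \<subseteq> R" and F: "F \<subseteq> edges" "EB edges T \<subseteq> F"
  have "ereal (sum u T) \<le> convolution (residual w) d T"
    using u T by blast
  also have "\<dots> \<le> ereal (rank F - sum w F)"
    using T R by (intro residual_boundD[OF bound _ F]) auto
  finally show "sum u T \<le> rank F - sum w F"
    by simp
qed

lemma residual_bound_witness:
  assumes w: "inP n m E0 f w" and bound: "residual_bound w d" and d: "\<forall>k\<in>buyers. 0 \<le> d k"
    and R: "R \<subseteq> buyers"
  shows "\<exists>y\<in>Pwd n m E0 f w d. (\<forall>e. e \<notin> EB edges R \<longrightarrow> y e = 0) \<and>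
           convolution (residual w) d R = ereal (sum y (EB edges R))"
proof -
  let ?G = "convolution (residual w) d"
  have fin_R: "finite R"
    using R finite_subset[OF _ finite_buyers] by blast
  obtain u where u: "\<forall>k. 0 \<le> u k" "\<forall>A\<subseteq>R. ereal (sum u A) \<le> ?G A" "ereal (sum u R) = ?G R"
    using convolution_residual_vector[OF bound d R] by blast
  have "hall_condition edges (\<lambda>F. rank F - sum w F) u R"
    using bound R u(2) by (rule hall_condition_residual)
  moreover have "submodular_on edges (\<lambda>F. rank F - sum w F)"
    by (rule submodular_on_diff_sum[OF finite_edges rank_submodular])
  ultimately have "\<exists>y. (\<forall>e. 0 \<le> y e) \<and> (\<forall>e. e \<notin> EB edges R \<longrightarrow> y e = 0) \<and>
      (\<forall>F\<subseteq>edges. sum y F \<le> rank F - sum w F) \<and> (\<forall>k\<in>R. sum y (EB edges {k}) = u k)"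
    using u(1) by (intro rado_submodular[OF finite_edges fin_R]) (auto simp: rank_empty)
  then obtain y where y: "\<forall>e. 0 \<le> y e" "\<forall>e. e \<notin> EB edges R \<longrightarrow> y e = 0"
      "\<forall>F\<subseteq>edges. sum y F \<le> rank F - sum w F" "\<forall>k\<in>R. sum y (EB edges {k}) = u k"
    by blast
  have "ereal (sum y (EB edges {k})) \<le> d k" if "k \<in> buyers" for k
  proof (cases "k \<in> R")
    case True
    then have "ereal (sum u {k}) \<le> ?G {k}"
      using u(2) by blast
    then have "ereal (sum y (EB edges {k})) \<le> ?G {k}"
      using y(4) True by simp
    also have "\<dots> \<le> d k"
      using convolution_singleton_le[of "residual w" d k] by (simp add: residual_empty)
    finally show ?thesis .
  next
    case False
    then have "sum y (EB edges {k}) = 0"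
      using y(2) by (intro sum.neutral) (auto simp: EB_def)
    then show ?thesis
      using d that by (simp add: zero_ereal_def[symmetric])
  qed
  moreover have "\<forall>F\<subseteq>edges. sum w F + sum y F \<le> rank F"
    using y(3) by auto
  moreover have "\<forall>e. e \<notin> edges \<longrightarrow> y e = 0"
    using y(2) EB_subset[of edges R] by blast
  ultimately have "y \<in> Pwd n m E0 f w d"
    using y(1) unfolding Pwd_iff[OF w] by blast
  moreover have "sum y (EB edges R) = sum u R"
    using sum_EB[OF finite_edges fin_R, of y] y(4) by simp
  ultimately show ?thesis
    using y(2) u(3) by (intro bexI[of _ y]) auto
qed

lemma admissible_xi_extends:
  assumes "admissible_xi n m E0 f w d i \<xi>" "y \<in> Pwd n m E0 f w d" "\<forall>e\<in>EB edges {i}. y e = 0"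
  obtains y' where "y' \<in> Pwd n m E0 f w d" "\<forall>e\<in>EB edges {i}. y' e = \<xi> e"
    "\<forall>k\<in>buyers - {i}. sum y' (EB edges {k}) = sum y (EB edges {k})"
proof -
  define u where "u k = (if k \<in> buyers - {i} then sum y (EB edges {k}) else 0)" for k
  have "u \<in> Pi_wd n m E0 f w d i (\<lambda>_. 0)"
    unfolding Pi_wd_def using assms(2,3) by (auto simp: u_def)
  then have "u \<in> Pi_wd n m E0 f w d i \<xi>"
    using assms(1) by (simp add: admissible_xi_def)
  then show ?thesis
    using that by (auto simp: Pi_wd_def u_def)
qed

lemma inP_add_le_Pwd:
  fixes \<xi> :: "nat \<times> nat \<Rightarrow> real"
  assumes w: "inP n m E0 f w" and y: "y \<in> Pwd n m E0 f w d"
    and \<xi>: "\<forall>e. 0 \<le> \<xi> e" "\<forall>e. e \<notin> edges \<longrightarrow> \<xi> e = 0" "\<forall>e\<in>edges. \<xi> e \<le> y e"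
  shows "inP n m E0 f (\<lambda>e. w e + \<xi> e)"
proof -
  have "sum w F + sum \<xi> F \<le> rank F" if "F \<subseteq> edges" for F
  proof -
    have "sum \<xi> F \<le> sum y F"
      using that \<xi>(3) by (intro sum_mono) auto
    moreover have "sum w F + sum y F \<le> rank F"
      using y that by (simp add: Pwd_iff[OF w])
    ultimately show ?thesis
      by linarith
  qed
  moreover have "\<forall>e. e \<notin> edges \<longrightarrow> w e + \<xi> e = 0"
    using w \<xi>(2) unfolding inP_iff by (simp del: split_paired_All)
  moreover have "\<forall>e\<in>edges. 0 \<le> w e + \<xi> e"
    using w \<xi>(1) unfolding inP_iff by (simp add: add_nonneg_nonneg del: split_paired_All)
  ultimately show ?thesis
    unfolding inP_iff by (simp add: sum.distrib)
qed

lemma admissible_xi_props: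
  assumes w: "inP n m E0 f w" and d: "\<forall>k\<in>buyers. 0 \<le> d k"
    and adm: "admissible_xi n m E0 f w d i \<xi>"
  shows "\<forall>e. 0 \<le> \<xi> e" "\<forall>e. e \<notin> EB edges {i} \<longrightarrow> \<xi> e = 0"
    and "i \<in> buyers \<Longrightarrow> ereal (sum \<xi> (EB edges {i})) \<le> d i"
    and "inP n m E0 f (\<lambda>e. w e + \<xi> e)"
proof -
  obtain y where y: "y \<in> Pwd n m E0 f w d" "\<forall>e\<in>EB edges {i}. y e = \<xi> e"
    by (rule admissible_xi_extends[OF adm zero_in_Pwd[OF w d]]) auto
  show xi_nonneg: "\<forall>e. 0 \<le> \<xi> e" and xi_zero: "\<forall>e. e \<notin> EB edges {i} \<longrightarrow> \<xi> e = 0"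
    using adm by (auto simp: admissible_xi_def)
  show "ereal (sum \<xi> (EB edges {i})) \<le> d i" if "i \<in> buyers"
  proof -
    have "sum \<xi> (EB edges {i}) = sum y (EB edges {i})"
      using y(2) by (intro sum.cong) auto
    then show ?thesis
      using y(1) that by (simp add: Pwd_iff[OF w])
  qed
  have "\<xi> e \<le> y e" if "e \<in> edges" for e
  proof (cases "e \<in> EB edges {i}")
    case False
    then show ?thesis
      using xi_zero[rule_format, OF False] y(1) that by (simp add: Pwd_iff[OF w])
  qed (use y(2) in simp)
  moreover have "\<forall>e. e \<notin> edges \<longrightarrow> \<xi> e = 0"
    using xi_zero EB_subset by blast
  ultimately show "inP n m E0 f (\<lambda>e. w e + \<xi> e)"
    using inP_add_le_Pwd[OF w y(1) xi_nonneg] by blast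
qed

lemma sum_le_row_sum:
  fixes \<xi> :: "nat \<times> nat \<Rightarrow> real"
  assumes "\<forall>e. 0 \<le> \<xi> e" "\<forall>e. e \<notin> EB edges {i} \<longrightarrow> \<xi> e = 0" "F \<subseteq> edges"
  shows "sum \<xi> F \<le> sum \<xi> (EB edges {i})"
proof -
  have "sum \<xi> F = sum \<xi> (F \<inter> EB edges {i})"
    using assms(2,3) finite_subset[OF assms(3) finite_edges] by (intro sum.mono_neutral_right) auto
  also have "\<dots> \<le> sum \<xi> (EB edges {i})"
    by (rule sum_mono2[OF finite_subset[OF EB_subset finite_edges]]) (use assms(1) in auto)
  finally show ?thesis .
qed

lemma residual_bound_clinch_mem:
  assumes w: "inP n m E0 f w" and bound: "residual_bound w d" and d: "\<forall>k\<in>buyers. 0 \<le> d k"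
    and adm: "admissible_xi n m E0 f w d i \<xi>"
    and R: "R \<subseteq> buyers" "i \<in> R" and F: "F \<subseteq> edges" "EB edges R \<subseteq> F"
  shows "convolution (residual (\<lambda>e. w e + \<xi> e)) (d(i := d i - ereal (sum \<xi> (EB edges {i})))) R
           \<le> ereal (rank F - sum (\<lambda>e. w e + \<xi> e) F)"
proof -
  let ?\<delta> = "sum \<xi> (EB edges {i})"
  note \<xi> = admissible_xi_props[OF w d adm]
  have fin_R: "finite R"
    using R(1) finite_subset[OF _ finite_buyers] by blast
  have "convolution (residual (\<lambda>e. w e + \<xi> e)) (d(i := d i - ereal ?\<delta>)) R + ereal ?\<delta>
      \<le> convolution (residual w) d R"
    using R d finite_subset[OF _ fin_R] residual_add_row[OF \<xi>(2)]
    by (intro convolution_shift_le[OF fin_R R(2)]) auto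
  also have "\<dots> \<le> ereal (rank F - sum w F)"
    using residual_boundD[OF bound R(1) F] .
  also have "\<dots> \<le> ereal (rank F - sum (\<lambda>e. w e + \<xi> e) F + ?\<delta>)"
    using sum_le_row_sum[OF \<xi>(1,2) F(1)] by (simp add: sum.distrib)
  finally show ?thesis
    by (cases "convolution (residual (\<lambda>e. w e + \<xi> e)) (d(i := d i - ereal ?\<delta>)) R") auto
qed

lemma Pwd_sum_rows_add_le:
  assumes w: "inP n m E0 f w" and y: "y \<in> Pwd n m E0 f w d"
    and i: "i \<notin> R" and F: "F \<subseteq> edges" "EB edges R \<subseteq> F"
    and \<xi>: "\<forall>e. e \<notin> EB edges {i} \<longrightarrow> \<xi> e = 0" "\<forall>e\<in>EB edges {i}. y e = \<xi> e"
  shows "sum y (EB edges R) + sum \<xi> F \<le> rank F - sum w F"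
proof -
  have fin_F: "finite F"
    using finite_subset[OF F(1) finite_edges] .
  have "sum \<xi> F = sum y (F \<inter> EB edges {i})"
    using \<xi> fin_F by (subst sum.mono_neutral_right[of F "F \<inter> EB edges {i}"]) (auto intro!: sum.cong)
  moreover have "EB edges R \<inter> (F \<inter> EB edges {i}) = {}"
    using i by (auto simp: EB_def)
  ultimately have "sum y (EB edges R) + sum \<xi> F = sum y (EB edges R \<union> (F \<inter> EB edges {i}))"
    using finite_subset[OF EB_subset finite_edges] fin_F by (simp add: sum.union_disjoint)
  also have "\<dots> \<le> sum y F"
    using y F fin_F by (intro sum_mono2) (auto simp: Pwd_iff[OF w])
  also have "\<dots> \<le> rank F - sum w F"
    using y F(1) by (simp add: Pwd_iff[OF w] algebra_simps)
  finally show ?thesis .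
qed

text \<open>For R not containing i, the clinched amount \<xi> can be added to a vector realising the
  convolution of R: this is what P^i(\<xi>) = P^i(0) guarantees.\<close>
lemma residual_bound_clinch_not_mem:
  assumes w: "inP n m E0 f w" and bound: "residual_bound w d" and d: "\<forall>k\<in>buyers. 0 \<le> d k"
    and adm: "admissible_xi n m E0 f w d i \<xi>"
    and R: "R \<subseteq> buyers" "i \<notin> R" and F: "F \<subseteq> edges" "EB edges R \<subseteq> F"
  shows "convolution (residual (\<lambda>e. w e + \<xi> e)) (d(i := d i - ereal (sum \<xi> (EB edges {i})))) R
           \<le> ereal (rank F - sum (\<lambda>e. w e + \<xi> e) F)"
proof -
  note \<xi> = admissible_xi_props[OF w d adm]
  have fin_R: "finite R"
    using R(1) finite_subset[OF _ finite_buyers] by blast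
  have conv_eq: "convolution (residual (\<lambda>e. w e + \<xi> e)) (d(i := d i - ereal (sum \<xi> (EB edges {i})))) R
      = convolution (residual w) d R"
    using R(2) finite_subset[OF _ fin_R] residual_add_row[OF \<xi>(2)]
    by (intro convolution_cong) auto
  obtain y where y: "y \<in> Pwd n m E0 f w d" "\<forall>e. e \<notin> EB edges R \<longrightarrow> y e = 0"
      "convolution (residual w) d R = ereal (sum y (EB edges R))"
    using residual_bound_witness[OF w bound d R(1)] by blast
  obtain y' where y': "y' \<in> Pwd n m E0 f w d" "\<forall>e\<in>EB edges {i}. y' e = \<xi> e"
      "\<forall>k\<in>buyers - {i}. sum y' (EB edges {k}) = sum y (EB edges {k})"
  proof (rule admissible_xi_extends[OF adm y(1)])
    show "\<forall>e\<in>EB edges {i}. y e = 0"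
      using y(2) R(2) by (auto simp: EB_def)
  qed
  have "sum y (EB edges R) = sum y' (EB edges R)"
    unfolding sum_EB[OF finite_edges fin_R]
  proof (rule sum.cong[OF refl])
    fix k assume "k \<in> R"
    then have "k \<in> buyers - {i}"
      using R by auto
    then show "sum y (EB edges {k}) = sum y' (EB edges {k})"
      using y'(3) by metis
  qed
  also have "\<dots> + sum \<xi> F \<le> rank F - sum w F"
    using Pwd_sum_rows_add_le[OF w y'(1) R(2) F \<xi>(2) y'(2)] .
  finally show ?thesis
    using y(3) conv_eq by (simp add: sum.distrib)
qed

lemma residual_bound_clinch:
  assumes "inP n m E0 f w" "residual_bound w d" "\<forall>k\<in>buyers. 0 \<le> d k"
    and "admissible_xi n m E0 f w d i \<xi>"
  shows "residual_bound (\<lambda>e. w e + \<xi> e) (d(i := d i - ereal (sum \<xi> (EB edges {i}))))"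
  unfolding residual_bound_def
  using residual_bound_clinch_mem[OF assms] residual_bound_clinch_not_mem[OF assms] by blast

section \<open>Invariance along the auction\<close>

definition pca_invariant :: "(nat \<Rightarrow> real) \<Rightarrow> (nat \<Rightarrow> real) \<Rightarrow> pca_state \<Rightarrow> bool" where
  "pca_invariant B v s \<longleftrightarrow>
     inP n m E0 f (sw s) \<and> sd s = dem (Bext n B) v (sp s) (sc s) \<and> (\<forall>k. 0 \<le> sc s k) \<and>
     (\<forall>k\<in>buyers. ereal (sp s k) \<le> Bext n B k) \<and> residual_bound (sw s) (sd s)"

lemma pca_invariant_demands_nonneg: "pca_invariant B v s \<Longrightarrow> \<forall>k\<in>buyers. 0 \<le> sd s k"
  unfolding pca_invariant_def by (auto intro: dem_nonneg)

lemma pca_invariant_init: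
  assumes "\<forall>i\<in>{1..n}. 0 \<le> B i"
  shows "pca_invariant B v pca_init"
proof -
  have "inP n m E0 f (\<lambda>_. 0)"
    by (simp add: inP_iff rank_nonneg)
  moreover have "residual_bound (\<lambda>_. 0) (\<lambda>_. \<infinity>)"
    unfolding residual_bound_def
  proof (intro allI impI)
    fix R F assume R: "R \<subseteq> buyers" and F: "F \<subseteq> edges" "EB edges R \<subseteq> F"
    have "convolution (residual (\<lambda>_. 0)) (\<lambda>_. \<infinity>) R \<le> ereal (residual (\<lambda>_. 0) R)"
      using convolution_le[OF finite_subset[OF R finite_buyers] subset_refl] by simp
    also have "\<dots> \<le> ereal (rank F)"
      using mono_onD[OF rank_mono] F EB_subset by (simp add: residual_def)
    finally show "convolution (residual (\<lambda>_. 0)) (\<lambda>_. \<infinity>) R \<le> ereal (rank F - sum (\<lambda>_. 0) F)"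
      by simp
  qed
  moreover have "\<forall>k\<in>buyers. ereal 0 \<le> Bext n B k"
    using assms by (auto simp: Bext_def Nset_def)
  ultimately show ?thesis
    by (simp add: pca_invariant_def pca_init_def dem_def fun_eq_iff zero_ereal_def)
qed

lemma pca_invariant_clinch_one:
  assumes inv: "pca_invariant B v s" and i: "i \<in> buyers" and step: "clinch_one n m E0 f B v i s s'"
  shows "pca_invariant B v s'"
proof -
  obtain \<xi> where "maximal_xi n m E0 f (sw s) (sd s) i \<xi>" and
    s': "s' = s\<lparr>sw := (\<lambda>e. sw s e + \<xi> e),
                sp := (sp s)(i := sp s i + sc s i * sum \<xi> (EB edges {i})),
                sd := dem (Bext n B) v ((sp s)(i := sp s i + sc s i * sum \<xi> (EB edges {i}))) (sc s),
                sr := (\<lambda>j. sr s j + sc s i * \<xi> (i, j))\<rparr>"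
    using step unfolding clinch_one_def Let_def by blast
  then have adm: "admissible_xi n m E0 f (sw s) (sd s) i \<xi>"
    by (simp add: maximal_xi_def)
  define \<delta> where "\<delta> = sum \<xi> (EB edges {i})"
  have w: "inP n m E0 f (sw s)" and dem: "sd s = dem (Bext n B) v (sp s) (sc s)"
    and c: "\<forall>k. 0 \<le> sc s k" and p: "\<forall>k\<in>buyers. ereal (sp s k) \<le> Bext n B k"
    and bound: "residual_bound (sw s) (sd s)"
    using inv unfolding pca_invariant_def by blast+
  have d: "\<forall>k\<in>buyers. 0 \<le> sd s k"
    using pca_invariant_demands_nonneg[OF inv] .
  note \<xi> = admissible_xi_props[OF w d adm]
  have "0 \<le> \<delta>"
    unfolding \<delta>_def using \<xi>(1) by (intro sum_nonneg) blast
  moreover have "ereal \<delta> \<le> dem (Bext n B) v (sp s) (sc s) i"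
    using \<xi>(3)[OF i] dem by (simp add: \<delta>_def)
  ultimately have pay: "dem (Bext n B) v ((sp s)(i := sp s i + sc s i * \<delta>)) (sc s) i = sd s i - ereal \<delta>"
      "ereal (sp s i + sc s i * \<delta>) \<le> Bext n B i"
    using dem_pay[of "sc s" i "sp s" "Bext n B" \<delta> v] c p i dem by auto
  have "sd s' = (sd s)(i := sd s i - ereal \<delta>)"
    using s' dem pay(1) by (auto simp: fun_eq_iff dem_def \<delta>_def)
  then have "residual_bound (sw s') (sd s')"
    using residual_bound_clinch[OF w bound d adm] s' by (simp add: \<delta>_def)
  moreover have "\<forall>k\<in>buyers. ereal (sp s' k) \<le> Bext n B k"
    using p pay(2) s' by (simp add: \<delta>_def)
  ultimately show ?thesis
    using \<xi>(4) s' c unfolding pca_invariant_def by simp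
qed

lemma pca_invariant_clinch_from:
  "clinch_from n m E0 f B v k s s' \<Longrightarrow> 1 \<le> k \<Longrightarrow> pca_invariant B v s \<Longrightarrow> pca_invariant B v s'"
proof (induction rule: clinch_from.induct)
  case (cf_next k s s' s'')
  then have "k \<in> buyers"
    by (simp add: Nset_def)
  then show ?case
    using cf_next pca_invariant_clinch_one by simp
qed

lemma pca_invariant_iter:
  assumes inv: "pca_invariant B v s" and \<epsilon>: "0 < \<epsilon>" and step: "pca_iter n m E0 f B v \<epsilon> s s'"
  shows "pca_invariant B v s'"
proof -
  obtain s1 where "clinch_from n m E0 f B v 1 s s1" and
    s': "s' = s1\<lparr>sc := (sc s1)(sl s1 := sc s1 (sl s1) + \<epsilon>),
                 sd := (sd s1)(sl s1 := dem (Bext n B) v (sp s1) ((sc s1)(sl s1 := sc s1 (sl s1) + \<epsilon>)) (sl s1)),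
                 sl := (if sl s1 \<ge> n + m then 1 else sl s1 + 1)\<rparr>"
    using step unfolding pca_iter_def Let_def by blast
  then have "pca_invariant B v s1"
    using pca_invariant_clinch_from inv by blast
  then have w: "inP n m E0 f (sw s1)" and dem: "sd s1 = dem (Bext n B) v (sp s1) (sc s1)"
    and c: "\<forall>k. 0 \<le> sc s1 k" and p: "\<forall>k\<in>buyers. ereal (sp s1 k) \<le> Bext n B k"
    and bound: "residual_bound (sw s1) (sd s1)"
    unfolding pca_invariant_def by blast+
  have dem': "sd s' = dem (Bext n B) v (sp s1) (sc s')"
    using s' dem by (auto simp: fun_eq_iff dem_def)
  have "\<forall>k\<in>buyers. sd s' k \<le> sd s1 k"
    using s' dem dem_raise_price[OF _ _ \<epsilon>] c p by auto
  then have "residual_bound (sw s') (sd s')"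
    using residual_bound_mono_weights[OF bound] s' by simp
  then show ?thesis
    using w dem' c p \<epsilon> s' unfolding pca_invariant_def by (simp add: add_nonneg_nonneg)
qed

lemma pca_invariant_reach:
  assumes "pca_reach n m E0 f B v \<epsilon> s" "\<forall>i\<in>{1..n}. 0 \<le> B i" "0 < \<epsilon>"
  shows "pca_invariant B v s"
  using assms(1)
proof (induction rule: pca_reach.induct)
  case init
  then show ?case
    using pca_invariant_init[OF assms(2)] .
next
  case (step s s')
  then show ?case
    using pca_invariant_iter assms(3) by blast
qed

lemma gfun_eq_convolution:
  assumes bound: "residual_bound w d" and d: "\<forall>k\<in>buyers. 0 \<le> d k" and S: "S \<subseteq> buyers"
  shows "gfun n m E0 f (\<lambda>i. sum w (EB edges {i})) d S = convolution (residual w) d S"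
proof -
  define M where "M S' = Min {ereal (residual w S'') | S''. S' \<subseteq> S'' \<and> S'' \<subseteq> buyers}" for S'
  have fin_M: "finite {ereal (residual w S'') | S''. S' \<subseteq> S'' \<and> S'' \<subseteq> buyers}" for S'
    using finite_buyers by (intro finite_image_set) (simp add: finite_subset[of _ "Pow buyers"] subset_eq)
  have fin_S: "finite S"
    using S finite_subset[OF _ finite_buyers] by blast
  have gfun: "gfun n m E0 f (\<lambda>i. sum w (EB edges {i})) d S = Min {M S' + sum d (S - S') | S'. S' \<subseteq> S}"
    by (simp add: gfun_def M_def residual_def)
  have fin_outer: "finite {M S' + sum d (S - S') | S'. S' \<subseteq> S}"
    using fin_S by (intro finite_image_set) simp
  show ?thesis
    unfolding gfun
  proof (rule antisym)
    obtain T where T: "T \<subseteq> S" "convolution (residual w) d S = ereal (residual w T) + sum d (S - T)"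
      using convolution_attained[OF fin_S] .
    have "M T \<le> ereal (residual w T)"
      unfolding M_def using fin_M T(1) S by (intro Min_le) auto
    then have "M T + sum d (S - T) \<le> convolution (residual w) d S"
      using T(2) by (simp add: add_right_mono)
    moreover have "Min {M S' + sum d (S - S') | S'. S' \<subseteq> S} \<le> M T + sum d (S - T)"
      using fin_outer T(1) by (intro Min_le) auto
    ultimately show "Min {M S' + sum d (S - S') | S'. S' \<subseteq> S} \<le> convolution (residual w) d S"
      by simp
  next
    have "Min {M S' + sum d (S - S') | S'. S' \<subseteq> S} \<in> {M S' + sum d (S - S') | S'. S' \<subseteq> S}"
      using fin_outer by (intro Min_in) auto
    then obtain S' where S': "S' \<subseteq> S" "Min {M S' + sum d (S - S') | S'. S' \<subseteq> S} = M S' + sum d (S - S')"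
      by blast
    have "M S' \<in> {ereal (residual w S'') | S''. S' \<subseteq> S'' \<and> S'' \<subseteq> buyers}"
      unfolding M_def using fin_M S' S by (intro Min_in) auto
    then obtain S'' where S'': "S' \<subseteq> S''" "S'' \<subseteq> buyers" "M S' = ereal (residual w S'')"
      by blast
    have "convolution (residual w) d S \<le> ereal (residual w S'') + sum d (S - S'')"
      using convolution_le_residual[OF bound d S S''(2)] .
    also have "\<dots> \<le> ereal (residual w S'') + sum d (S - S')"
      using fin_S d S S''(1) by (intro add_left_mono sum_mono2) auto
    finally show "convolution (residual w) d S \<le> Min {M S' + sum d (S - S') | S'. S' \<subseteq> S}"
      using S' S'' by simp
  qed
qed

end

theorem proposition3p8:
  fixes n m :: nat and E0 :: "(nat \<times> nat) set"
    and f :: "nat \<Rightarrow> (nat \<times> nat) set \<Rightarrow> real"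
    and B :: "nat \<Rightarrow> real" and v :: "nat \<Rightarrow> real" and \<epsilon> :: real
    and s :: pca_state and S :: "nat set"
  assumes E0: "E0 \<subseteq> {1..n} \<times> {1..m}"
    and f_nonneg: "\<forall>j\<in>{1..m}. \<forall>F. F \<subseteq> ES E0 j \<longrightarrow> 0 \<le> f j F"
    and f_empty: "\<forall>j\<in>{1..m}. f j {} = 0"
    and f_mono: "\<forall>j\<in>{1..m}. \<forall>F G. F \<subseteq> G \<and> G \<subseteq> ES E0 j \<longrightarrow> f j F \<le> f j G"
    and f_submod: "\<forall>j\<in>{1..m}. \<forall>F G. F \<subseteq> ES E0 j \<and> G \<subseteq> ES E0 j \<longrightarrow>
                       f j (F \<union> G) + f j (F \<inter> G) \<le> f j F + f j G"
    and B_nonneg: "\<forall>i\<in>{1..n}. 0 \<le> B i"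
    and eps: "\<epsilon> > 0"
    and bids: "\<forall>i\<in>{1..n+m}. \<exists>k::nat. k \<ge> 1 \<and> v i = real k * \<epsilon>"
    and reach: "pca_reach n m E0 f B v \<epsilon> s"
    and running: "\<exists>k\<in>{1..n+m}. sd s k \<noteq> 0"
    and S: "S \<subseteq> {1..n+m}"
  shows "gfun n m E0 f (\<lambda>i. sum (sw s) (EB (Eall n m E0) {i})) (sd s) S =
         Min {ereal (ftot n m E0 f (EB (Eall n m E0) S') - (\<Sum>i\<in>S'. sum (sw s) (EB (Eall n m E0) {i})))
              + sum (sd s) (S - S') | S'. S' \<subseteq> S}"
proof -
  interpret market n m E0 f
    using E0 f_nonneg f_empty f_mono f_submod by unfold_locales
  have inv: "pca_invariant B v s"
    using reach B_nonneg eps by (rule pca_invariant_reach)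
  have "S \<subseteq> buyers"
    using S by (simp add: Nset_def)
  then have "gfun n m E0 f (\<lambda>i. sum (sw s) (EB edges {i})) (sd s) S = convolution (residual (sw s)) (sd s) S"
    using inv pca_invariant_demands_nonneg[OF inv] by (intro gfun_eq_convolution) (auto simp: pca_invariant_def)
  also have "\<dots> = Min {ereal (rank (EB edges S') - (\<Sum>i\<in>S'. sum (sw s) (EB edges {i}))) + sum (sd s) (S - S') | S'. S' \<subseteq> S}"
    unfolding convolution_def residual_def by (intro arg_cong[where f = Min]) auto
  finally show ?thesis .
qed

end
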